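(* For every instance, $$\mathrm{opt}\text{-}\mathrm{SUM}\le \mathrm{opt}_M\text{-}\mathrm{SUM}\le 2\,\mathrm{opt}\text{-}\mathrm{SUM}\qquad\text{and}\qquad \mathrm{opt}\text{-}\mathrm{MAX}\le \mathrm{opt}_M\text{-}\mathrm{MAX}\le 2\,\mathrm{opt}\text{-}\mathrm{MAX}.$$
   Context: An instance consists of a finite set $E$ of elements with nonnegative weights $(p_e)_{e\in E}$ (normalized $\sum_e p_e=1$ for SUM objectives and $\max_e p_e=1$ for MAX objectives), and $m$ tests; test $i\in[m]$ is a subset $s_i\subseteq E$. A schedule is an infinite test sequence $\sigma_1,\sigma_2,\dots\in[m]$; a stochastic schedule generates it randomly with the distribution of $\sigma_t$ possibly depending on $\sigma_1,\dots,\sigma_{t-1}$; a memoryless schedule draws each $\sigma_t$ independently from a fixed distribution $q$ on $[m]$. Detection time $T(e,t)=\mathbb{E}[1+\min\{h\ge0:e\in s_{\sigma_{t+h}}\}]$, $M_t[e]=\sup_tT(e,t)$, $E_t[e]=\lim_H\frac1H\sum_{t\le H}T(e,t)$. Valid: for every $e$, $M_t[e]<\infty$ and $E_t[e]$ exists, and for every $i$, $\lim_H\frac1H\sum_{t\le H}\Pr[\sigma_t=i]$ exists. $\mathrm{EEP}=\sum_ep_eE_t[e]$, $\mathrm{WEP}=\max_ep_eE_t[e]$. $\mathrm{opt}\text{-}\mathrm{SUM}$ and $\mathrm{opt}\text{-}\mathrm{MAX}$ are the infima of EEP and WEP over valid stochastic schedules; $\mathrm{opt}_M\text{-}\mathrm{SUM}$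 and $\mathrm{opt}_M\text{-}\mathrm{MAX}$ are the infima of EEP and WEP over valid memoryless schedules (equal to $\inf_q\sum_ep_e/Q_e$ and $\inf_q\max_ep_e/Q_e$, $Q_e=\sum_{i:e\in s_i}q_i$). *)

theory Defs
  imports "HOL-Probability.Probability"
begin

text \<open>Instance: elements of type 'e with finite carrier E, weights p, tests
  s 0, ..., s (m-1) (test i is the set s i).  Schedules are indexed from time 0.\<close>

definition seq_space :: "(nat \<Rightarrow> nat) measure" where
  "seq_space = PiM UNIV (\<lambda>_::nat. count_space (UNIV::nat set))"

text \<open>A stochastic schedule: an arbitrary probability distribution on infinite
  sequences of tests in [m] (this covers every adaptive sequential randomisation).\<close>
definition stochastic_schedule :: "nat \<Rightarrow> (nat \<Rightarrow> nat) measure \<Rightarrow> bool" where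
  "stochastic_schedule m M \<longleftrightarrow> prob_space M \<and> sets M = sets seq_space
      \<and> (AE \<omega> in M. \<forall>t. \<omega> t < m)"

definition memoryless_schedule :: "nat \<Rightarrow> (nat \<Rightarrow> nat) measure \<Rightarrow> bool" where
  "memoryless_schedule m M \<longleftrightarrow>
     (\<exists>q :: nat pmf. set_pmf q \<subseteq> {..<m} \<and> M = PiM UNIV (\<lambda>_::nat. measure_pmf q))"

definition wait_time :: "(nat \<Rightarrow> 'e set) \<Rightarrow> 'e \<Rightarrow> (nat \<Rightarrow> nat) \<Rightarrow> nat \<Rightarrow> ennreal" where
  "wait_time s e \<omega> t =
     (if \<exists>h. e \<in> s (\<omega> (t + h)) then of_nat (Suc (LEAST h. e \<in> s (\<omega> (t + h)))) else \<infinity>)"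

definition det_time :: "(nat \<Rightarrow> 'e set) \<Rightarrow> (nat \<Rightarrow> nat) measure \<Rightarrow> 'e \<Rightarrow> nat \<Rightarrow> ennreal" where
  "det_time s M e t = (\<integral>\<^sup>+ \<omega>. wait_time s e \<omega> t \<partial>M)"

definition max_time :: "(nat \<Rightarrow> 'e set) \<Rightarrow> (nat \<Rightarrow> nat) measure \<Rightarrow> 'e \<Rightarrow> ennreal" where
  "max_time s M e = (SUP t. det_time s M e t)"

definition avg_time_seq :: "(nat \<Rightarrow> 'e set) \<Rightarrow> (nat \<Rightarrow> nat) measure \<Rightarrow> 'e \<Rightarrow> nat \<Rightarrow> real" where
  "avg_time_seq s M e H = (\<Sum>t<H. enn2real (det_time s M e t)) / real H"

definition exp_time :: "(nat \<Rightarrow> 'e set) \<Rightarrow> (nat \<Rightarrow> nat) measure \<Rightarrow> 'e \<Rightarrow> real" where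
  "exp_time s M e = lim (avg_time_seq s M e)"

definition valid_schedule ::
  "'e set \<Rightarrow> nat \<Rightarrow> (nat \<Rightarrow> 'e set) \<Rightarrow> (nat \<Rightarrow> nat) measure \<Rightarrow> bool" where
  "valid_schedule E m s M \<longleftrightarrow> stochastic_schedule m M
     \<and> (\<forall>e\<in>E. max_time s M e < \<infinity> \<and> convergent (avg_time_seq s M e))
     \<and> (\<forall>i<m. convergent
           (\<lambda>H. (\<Sum>t<H. measure M {\<omega> \<in> space M. \<omega> t = i}) / real H))"

definition EEP :: "'e set \<Rightarrow> ('e \<Rightarrow> real) \<Rightarrow> (nat \<Rightarrow> 'e set) \<Rightarrow> (nat \<Rightarrow> nat) measure \<Rightarrow> real" where
  "EEP E p s M = (\<Sum>e\<in>E. p e * exp_time s M e)"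

definition WEP :: "'e set \<Rightarrow> ('e \<Rightarrow> real) \<Rightarrow> (nat \<Rightarrow> 'e set) \<Rightarrow> (nat \<Rightarrow> nat) measure \<Rightarrow> real" where
  "WEP E p s M = Max ((\<lambda>e. p e * exp_time s M e) ` E)"

text \<open>Optima as infima in the extended reals (the infimum of the empty set is \<infinity>).\<close>
definition opt_SUM :: "'e set \<Rightarrow> ('e \<Rightarrow> real) \<Rightarrow> nat \<Rightarrow> (nat \<Rightarrow> 'e set) \<Rightarrow> ereal" where
  "opt_SUM E p m s = (INF M \<in> {M. valid_schedule E m s M}. ereal (EEP E p s M))"

definition opt_MAX :: "'e set \<Rightarrow> ('e \<Rightarrow> real) \<Rightarrow> nat \<Rightarrow> (nat \<Rightarrow> 'e set) \<Rightarrow> ereal" where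
  "opt_MAX E p m s = (INF M \<in> {M. valid_schedule E m s M}. ereal (WEP E p s M))"

definition optM_SUM :: "'e set \<Rightarrow> ('e \<Rightarrow> real) \<Rightarrow> nat \<Rightarrow> (nat \<Rightarrow> 'e set) \<Rightarrow> ereal" where
  "optM_SUM E p m s = (INF M \<in> {M. memoryless_schedule m M \<and> valid_schedule E m s M}.
                          ereal (EEP E p s M))"

definition optM_MAX :: "'e set \<Rightarrow> ('e \<Rightarrow> real) \<Rightarrow> nat \<Rightarrow> (nat \<Rightarrow> 'e set) \<Rightarrow> ereal" where
  "optM_MAX E p m s = (INF M \<in> {M. memoryless_schedule m M \<and> valid_schedule E m s M}.
                          ereal (WEP E p s M))"

end

theory Submission
  imports Defs
begin

text \<open>Let \<open>q\<close> be the long-run frequency with which a valid schedule runs each test, and let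
  \<open>Q\<^sub>e\<close> be the \<open>q\<close>-probability that a test contains \<open>e\<close>. If \<open>e\<close> is tested \<open>N\<close> times
  during the first \<open>H\<close> steps, then for each \<open>k\<close> at least \<open>H - k(N + 1)\<close> of the starting times
  \<open>t < H\<close> are followed by \<open>k\<close> tests missing \<open>e\<close>, so the waiting times from these starting
  times add up to at least \<open>H\<^sup>2 / (2(N + 1))\<close>. As \<open>y \<mapsto> 1/y\<close> is convex and the expectation
  of \<open>N\<close> is about \<open>H Q\<^sub>e\<close>, the average detection time of \<open>e\<close> is at least \<open>1 / (2 Q\<^sub>e)\<close>.
  The memoryless schedule drawing its tests independently from \<open>q\<close> detects \<open>e\<close> in expected
  time exactly \<open>1 / Q\<^sub>e\<close>, so it loses at most a factor \<open>2\<close> on every element at once.\<close>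

lemma sum_ramp_ge:
  fixes H c :: real
  assumes "H \<ge> 0" "c > 0"
  shows "H ^ 2 / (2 * c) \<le> (\<Sum>k<nat \<lceil>H / c\<rceil>. H - real k * c)"
proof -
  define x where "x = H / c"
  define K where "K = nat \<lceil>x\<rceil>"
  have x0: "x \<ge> 0" and Hx: "H = c * x" using assms by (simp_all add: x_def)
  have K: "x \<le> K" "K < x + 1" using x0 ceiling_correct[of x] by (auto simp: K_def)
  have gauss: "(\<Sum>k<n. real k) = real n * (real n - 1) / 2" for n
    by (induction n) (auto simp: field_simps)
  have "(K - x) ^ 2 \<le> K - x"
    using K mult_left_mono[of "K - x" 1 "K - x"] by (simp add: power2_eq_square)
  then have "0 \<le> c / 2 * (K - (K - x) ^ 2)" using x0 assms(2) by simp
  also have "\<dots> = (\<Sum>k<K. H - real k * c) - H ^ 2 / (2 * c)"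
    using assms(2) by (simp add: sum_subtractf gauss flip: sum_distrib_right)
      (simp add: Hx field_simps power2_eq_square)
  finally show ?thesis by (simp add: K_def x_def)
qed

lemma card_tested_within_le:
  fixes P :: "nat \<Rightarrow> bool"
  shows "card {t\<in>{..<H}. \<exists>h<k. P (t + h)} \<le> card {t\<in>{..<H}. P t} * k + k"
proof -
  let ?J = "{t\<in>{..<H}. P t}"
  have "{t\<in>{..<H}. \<exists>h<k. P (t + h)} \<subseteq> (\<lambda>(j, h). j - h) ` (?J \<times> {..<k}) \<union> {H - k..<H}"
  proof
    fix t assume "t \<in> {t\<in>{..<H}. \<exists>h<k. P (t + h)}"
    then obtain h where t: "t < H" "h < k" "P (t + h)" by auto
    show "t \<in> (\<lambda>(j, h). j - h) ` (?J \<times> {..<k}) \<union> {H - k..<H}"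
    proof (cases "t + h < H")
      case True
      with t have "(t + h, h) \<in> ?J \<times> {..<k}" by auto
      then show ?thesis by (auto intro!: image_eqI[of _ _ "(t + h, h)"])
    qed (use t in auto)
  qed
  then have "card {t\<in>{..<H}. \<exists>h<k. P (t + h)}
      \<le> card ((\<lambda>(j, h). j - h) ` (?J \<times> {..<k}) \<union> {H - k..<H})"
    by (rule card_mono[rotated]) auto
  also have "\<dots> \<le> card (?J \<times> {..<k}) + k"
    by (rule order_trans[OF card_Un_le add_mono[OF card_image_le]]) auto
  finally show ?thesis by (simp add: card_cartesian_product)
qed

lemma inverse_ge_tangent:
  fixes y a :: real
  assumes "y > 0" "a > 0"
  shows "2 / a - y / a ^ 2 \<le> 1 / y"
proof -
  have "1 / y - (2 / a - y / a ^ 2) = (a - y) ^ 2 / (y * a ^ 2)"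
    using assms by (simp add: field_simps power2_eq_square)
  then show ?thesis
    using assms by (smt (verit) divide_nonneg_pos zero_less_power zero_le_power2 mult_pos_pos)
qed

lemma (in prob_space) inverse_expectation_succ_le:
  fixes N :: "'a \<Rightarrow> real"
  assumes N: "integrable M N" and N0: "\<And>\<omega>. \<omega> \<in> space M \<Longrightarrow> 0 \<le> N \<omega>"
  shows "1 / (expectation N + 1) \<le> expectation (\<lambda>\<omega>. 1 / (N \<omega> + 1))"
proof -
  \<comment> \<open>Jensen's inequality for \<open>y \<mapsto> 1/y\<close>, via its tangent at \<open>y = a\<close>.\<close>
  define a where "a = expectation N + 1"
  have "0 \<le> expectation N" by (rule Bochner_Integration.integral_nonneg) (rule N0)
  then have a: "a > 0" by (simp add: a_def)
  have tangent_int: "integrable M (\<lambda>\<omega>. 2 / a - (N \<omega> + 1) / a ^ 2)"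
    using N by simp
  have "N \<in> borel_measurable M" using N by auto
  then have inverse_int: "integrable M (\<lambda>\<omega>. 1 / (N \<omega> + 1))"
    by (intro integrable_const_bound[where B=1]) (auto intro!: AE_I2 dest!: N0)
  have "1 / a = 2 / a - a / a ^ 2"
    using a by (simp add: field_simps power2_eq_square)
  also have "\<dots> = expectation (\<lambda>\<omega>. 2 / a - (N \<omega> + 1) / a ^ 2)"
    using N by (simp add: Bochner_Integration.integral_diff prob_space a_def)
  also have "\<dots> \<le> expectation (\<lambda>\<omega>. 1 / (N \<omega> + 1))"
    using tangent_int inverse_int a N0
    by (intro Bochner_Integration.integral_mono inverse_ge_tangent add_nonneg_pos) auto
  finally show ?thesis by (simp add: a_def)
qed

lemma INF_le_scaled_INF:
  fixes f g :: "'a \<Rightarrow> real"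
  assumes "c > 0" and "\<And>x. x \<in> A \<Longrightarrow> \<exists>y\<in>B. f y \<le> c * g x"
  shows "(INF y\<in>B. ereal (f y)) \<le> ereal c * (INF x\<in>A. ereal (g x))"
proof -
  have "ereal (1 / c) * (INF y\<in>B. ereal (f y)) \<le> ereal (g x)" if x: "x \<in> A" for x
  proof -
    obtain y where "y \<in> B" "f y \<le> c * g x" using assms(2)[OF x] by blast
    then have "(INF y\<in>B. ereal (f y)) \<le> ereal c * ereal (g x)" by (auto intro: INF_lower2)
    then have "ereal (1 / c) * (INF y\<in>B. ereal (f y)) \<le> ereal (1 / c) * (ereal c * ereal (g x))"
      using assms(1) by (intro ereal_mult_left_mono) auto
    then show ?thesis using assms(1) by (simp add: mult.assoc[symmetric])
  qed
  then have "ereal c * (ereal (1 / c) * (INF y\<in>B. ereal (f y))) \<le> ereal c * (INF x\<in>A. ereal (g x))"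
    using assms(1) by (intro ereal_mult_left_mono INF_greatest) auto
  then show ?thesis using assms(1) by (simp add: mult.assoc[symmetric])
qed

section \<open>Waiting times\<close>

definition untested :: "(nat \<Rightarrow> 'e set) \<Rightarrow> 'e \<Rightarrow> nat \<Rightarrow> nat \<Rightarrow> (nat \<Rightarrow> nat) set" where
  "untested s e t k = {\<omega>. \<forall>h<k. e \<notin> s (\<omega> (t + h))}"

lemma wait_time_eq_suminf_untested:
  "wait_time s e \<omega> t = (\<Sum>k. indicator (untested s e t k) \<omega> :: ennreal)"
proof (cases "\<exists>h. e \<in> s (\<omega> (t + h))")
  case True
  define L where "L = (LEAST h. e \<in> s (\<omega> (t + h)))"
  have hit: "e \<in> s (\<omega> (t + L))" unfolding L_def using True by (rule LeastI_ex)
  have ind: "indicator (untested s e t k) \<omega> = (if k \<le> L then 1 else (0::ennreal))" for k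
  proof (cases "k \<le> L")
    case True
    then have "\<forall>h<k. e \<notin> s (\<omega> (t + h))"
      unfolding L_def by (meson less_le_trans not_less_Least)
    then show ?thesis using True by (simp add: untested_def)
  next
    case False
    then have "\<not> (\<forall>h<k. e \<notin> s (\<omega> (t + h)))" using hit by (metis not_le)
    then show ?thesis using False by (simp add: untested_def)
  qed
  have "(\<Sum>k. indicator (untested s e t k) \<omega> :: ennreal) = (\<Sum>k\<le>L. indicator (untested s e t k) \<omega>)"
    by (rule suminf_finite) (simp_all add: ind)
  also have "\<dots> = of_nat (Suc L)" by (simp add: ind)
  finally show ?thesis using True by (simp add: wait_time_def L_def)
next
  case False
  then have "indicator (untested s e t k) \<omega> = ennreal 1" for k
    by (simp add: untested_def)
  moreover have "(\<Sum>k. ennreal 1) = \<top>"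
    by (intro summable_iff_suminf_neq_top) (auto simp: summable_const_iff)
  ultimately show ?thesis using False by (simp add: wait_time_def)
qed

lemma space_seq_space [simp]: "space seq_space = UNIV"
  by (simp add: seq_space_def space_PiM)

lemma component_in_seq_space: "{\<omega>. \<omega> j \<in> B} \<in> sets seq_space"
proof -
  have "(\<lambda>\<omega>. \<omega> j) \<in> measurable seq_space (count_space UNIV)"
    unfolding seq_space_def by (rule measurable_component_singleton) simp
  from measurable_sets[OF this, of B] show ?thesis by (simp add: vimage_def)
qed

lemma untested_in_seq_space: "untested s e t k \<in> sets seq_space"
proof (induction k)
  case 0
  then show ?case by (simp add: untested_def flip: space_seq_space)
next
  case (Suc k)
  have "untested s e t (Suc k) = untested s e t k \<inter> {\<omega>. \<omega> (t + k) \<in> {i. e \<notin> s i}}"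
    by (auto simp: untested_def less_Suc_eq)
  then show ?case using Suc component_in_seq_space by (metis sets.Int)
qed

lemma det_time_eq_suminf:
  assumes "sets M = sets seq_space"
  shows "det_time s M e t = (\<Sum>k. emeasure M (untested s e t k))"
proof -
  have meas: "untested s e t k \<in> sets M" for k using assms untested_in_seq_space by simp
  have "det_time s M e t = (\<integral>\<^sup>+ \<omega>. (\<Sum>k. indicator (untested s e t k) \<omega>) \<partial>M)"
    unfolding det_time_def by (simp add: wait_time_eq_suminf_untested)
  also have "\<dots> = (\<Sum>k. \<integral>\<^sup>+ \<omega>. indicator (untested s e t k) \<omega> \<partial>M)"
    by (rule nn_integral_suminf) (intro borel_measurable_indicator meas)
  finally show ?thesis by (simp add: meas)
qed

lemma wait_time_measurable:
  assumes "sets M = sets seq_space"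
  shows "(\<lambda>\<omega>. wait_time s e \<omega> t) \<in> borel_measurable M"
  unfolding wait_time_eq_suminf_untested
  using assms untested_in_seq_space
  by (intro borel_measurable_suminf_order borel_measurable_indicator) simp

section \<open>Memoryless schedules\<close>

abbreviation iid_schedule :: "nat pmf \<Rightarrow> (nat \<Rightarrow> nat) measure" where
  "iid_schedule q \<equiv> PiM UNIV (\<lambda>_::nat. measure_pmf q)"

lemma sets_iid_schedule: "sets (iid_schedule q) = sets seq_space"
  unfolding seq_space_def by (intro sets_PiM_cong) auto

lemma emeasure_iid_untested:
  "emeasure (iid_schedule q) (untested s e t k)
     = ennreal ((1 - measure_pmf.prob q {i. e \<in> s i}) ^ k)"
proof -
  interpret product_prob_space "\<lambda>_::nat. measure_pmf q" UNIV by unfold_locales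
  have eq: "untested s e t k = {\<omega> \<in> space (iid_schedule q). \<forall>j\<in>{t..<t+k}. \<omega> j \<in> {i. e \<notin> s i}}"
    by (auto simp: untested_def space_PiM Ball_def)
      (metis add_diff_inverse_nat add_less_cancel_left not_less)
  have "emeasure (iid_schedule q) (untested s e t k)
      = (\<Prod>j\<in>{t..<t+k}. emeasure (measure_pmf q) {i. e \<notin> s i})"
    unfolding eq by (rule emeasure_PiM_Collect) auto
  also have "\<dots> = emeasure (measure_pmf q) {i. e \<notin> s i} ^ k" by simp
  also have "{i. e \<notin> s i} = UNIV - {i. e \<in> s i}" by auto
  finally show ?thesis
    by (simp add: measure_pmf.emeasure_eq_measure ennreal_power
        measure_pmf.prob_compl[of _ q, simplified])
qed

lemma det_time_iid:
  assumes "measure_pmf.prob q {i. e \<in> s i} > 0"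
  shows "det_time s (iid_schedule q) e t = ennreal (1 / measure_pmf.prob q {i. e \<in> s i})"
proof -
  let ?Q = "measure_pmf.prob q {i. e \<in> s i}"
  have "det_time s (iid_schedule q) e t = (\<Sum>k. ennreal ((1 - ?Q) ^ k))"
    by (simp add: det_time_eq_suminf[OF sets_iid_schedule] emeasure_iid_untested)
  also have "\<dots> = ennreal (1 / (1 - (1 - ?Q)))"
    using assms measure_pmf.prob_le_1[of q] by (intro suminf_ennreal_eq geometric_sums) auto
  finally show ?thesis by simp
qed

lemma LIMSEQ_avg_time_seq_iid:
  assumes "measure_pmf.prob q {i. e \<in> s i} > 0"
  shows "avg_time_seq s (iid_schedule q) e \<longlonglongrightarrow> 1 / measure_pmf.prob q {i. e \<in> s i}"
  using assms by (intro tendsto_eventually eventually_sequentiallyI[of 1])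
    (simp add: avg_time_seq_def det_time_iid)

lemma exp_time_iid:
  assumes "measure_pmf.prob q {i. e \<in> s i} > 0"
  shows "exp_time s (iid_schedule q) e = 1 / measure_pmf.prob q {i. e \<in> s i}"
  unfolding exp_time_def using LIMSEQ_avg_time_seq_iid[OF assms] by (rule limI)

definition test_frequency :: "(nat \<Rightarrow> nat) measure \<Rightarrow> nat \<Rightarrow> nat \<Rightarrow> real" where
  "test_frequency M i H = (\<Sum>t<H. measure M {\<omega> \<in> space M. \<omega> t = i}) / real H"

lemma test_frequency_iid:
  assumes "H > 0"
  shows "test_frequency (iid_schedule q) i H = pmf q i"
proof -
  interpret product_prob_space "\<lambda>_::nat. measure_pmf q" UNIV by unfold_locales
  have "emeasure (iid_schedule q) {\<omega> \<in> space (iid_schedule q). \<omega> t \<in> {i}}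
      = emeasure (measure_pmf q) {i}" for t
    by (rule emeasure_PiM_Collect_single) auto
  then have "measure (iid_schedule q) {\<omega> \<in> space (iid_schedule q). \<omega> t = i} = pmf q i" for t
    by (simp add: measure_def emeasure_pmf_single)
  then show ?thesis using assms by (simp add: test_frequency_def)
qed

lemma memoryless_iid_schedule: "set_pmf q \<subseteq> {..<m} \<Longrightarrow> memoryless_schedule m (iid_schedule q)"
  unfolding memoryless_schedule_def by blast

lemma valid_iid_schedule:
  assumes q: "set_pmf q \<subseteq> {..<m}" and pos: "\<forall>e\<in>E. measure_pmf.prob q {i. e \<in> s i} > 0"
  shows "valid_schedule E m s (iid_schedule q)"
  unfolding valid_schedule_def stochastic_schedule_def test_frequency_def [symmetric]
proof (intro conjI ballI allI impI)
  interpret P: product_prob_space "\<lambda>_::nat. measure_pmf q" UNIV by unfold_locales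
  show "prob_space (iid_schedule q)" by (rule P.prob_space_axioms)
  show "sets (iid_schedule q) = sets seq_space" by (rule sets_iid_schedule)
  show "AE \<omega> in iid_schedule q. \<forall>t. \<omega> t < m"
    unfolding AE_all_countable
    by (intro allI P.AE_component) (use q in \<open>auto simp: AE_measure_pmf_iff\<close>)
next
  fix e assume "e \<in> E"
  then have Q: "measure_pmf.prob q {i. e \<in> s i} > 0" using pos by blast
  then show "max_time s (iid_schedule q) e < \<infinity>" by (simp add: max_time_def det_time_iid)
  show "convergent (avg_time_seq s (iid_schedule q) e)"
    using LIMSEQ_avg_time_seq_iid[OF Q] by (rule convergentI)
next
  fix i
  have "test_frequency (iid_schedule q) i \<longlonglongrightarrow> pmf q i"
    by (intro tendsto_eventually eventually_sequentiallyI[of 1]) (simp add: test_frequency_iid)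
  then show "convergent (test_frequency (iid_schedule q) i)" by (rule convergentI)
qed

section \<open>Detection times of arbitrary schedules\<close>

lemma card_untested_ge:
  "real H - real k * (real (card {t\<in>{..<H}. e \<in> s (\<omega> t)}) + 1)
     \<le> real (card {t\<in>{..<H}. \<omega> \<in> untested s e t k})"
proof -
  let ?A = "{t\<in>{..<H}. \<omega> \<in> untested s e t k}" and ?B = "{t\<in>{..<H}. \<exists>h<k. e \<in> s (\<omega> (t + h))}"
  have "?A \<union> ?B = {..<H}" "?A \<inter> ?B = {}" by (auto simp: untested_def)
  then have "card ?A + card ?B = H" using card_Un_disjoint[of ?A ?B] by simp
  moreover have "card ?B \<le> card {t\<in>{..<H}. e \<in> s (\<omega> t)} * k + k"
    by (rule card_tested_within_le)
  ultimately have "H \<le> card ?A + card {t\<in>{..<H}. e \<in> s (\<omega> t)} * k + k" by linarith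
  then have "real H \<le> real (card ?A) + real (card {t\<in>{..<H}. e \<in> s (\<omega> t)}) * real k + real k"
    by (simp only: of_nat_add [symmetric] of_nat_mult [symmetric] of_nat_le_iff)
  then show ?thesis by (simp add: algebra_simps)
qed

lemma sum_wait_time_ge:
  "ennreal (real H ^ 2 / (2 * (real (card {t\<in>{..<H}. e \<in> s (\<omega> t)}) + 1)))
     \<le> (\<Sum>t<H. wait_time s e \<omega> t)"
proof -
  define c where "c = real (card {t\<in>{..<H}. e \<in> s (\<omega> t)}) + 1"
  define untested_count where "untested_count k = card {t\<in>{..<H}. \<omega> \<in> untested s e t k}" for k
  have count_eq: "(\<Sum>t<H. indicator (untested s e t k) \<omega> :: ennreal) = of_nat (untested_count k)"
    for k
    by (simp add: untested_count_def indicator_def sum.If_cases Int_def)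
  define K where "K = nat \<lceil>real H / c\<rceil>"
  have "real H ^ 2 / (2 * c) \<le> (\<Sum>k<K. real H - real k * c)"
    unfolding K_def by (rule sum_ramp_ge) (simp_all add: c_def add_nonneg_pos)
  also have "\<dots> \<le> (\<Sum>k<K. real (untested_count k))"
    by (rule sum_mono) (use card_untested_ge in \<open>simp add: untested_count_def c_def\<close>)
  finally have "ennreal (real H ^ 2 / (2 * c)) \<le> (\<Sum>k<K. of_nat (untested_count k))"
    by (simp add: ennreal_leI ennreal_of_nat_eq_real_of_nat sum_ennreal)
  also have "\<dots> \<le> (\<Sum>k. of_nat (untested_count k))"
    by (rule sum_le_suminf) auto
  also have "\<dots> = (\<Sum>t<H. wait_time s e \<omega> t)"
    using count_eq by (simp add: wait_time_eq_suminf_untested flip: suminf_sum)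
  finally show ?thesis by (simp add: c_def)
qed

lemma sum_det_time_ge:
  assumes "prob_space M" and sets: "sets M = sets seq_space"
  shows "ennreal (real H ^ 2 / (2 * ((\<Sum>t<H. measure M {\<omega>. e \<in> s (\<omega> t)}) + 1)))
           \<le> (\<Sum>t<H. det_time s M e t)"
proof -
  interpret prob_space M by fact
  have tested: "{\<omega>. e \<in> s (\<omega> t)} \<in> sets M" for t
    using component_in_seq_space[of t "{i. e \<in> s i}"] sets by simp
  define N where "N \<omega> = real (card {t\<in>{..<H}. e \<in> s (\<omega> t)})" for \<omega>
  have N_sum: "N = (\<lambda>\<omega>. \<Sum>t<H. indicator {\<omega>. e \<in> s (\<omega> t)} \<omega>)"
    by (simp add: N_def indicator_def sum.If_cases Int_def fun_eq_iff)
  have N_int: "integrable M N"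
    unfolding N_sum using tested
    by (intro Bochner_Integration.integrable_sum integrable_real_indicator)
      (auto simp: emeasure_eq_measure)
  have N_nonneg: "0 \<le> N \<omega>" for \<omega> by (simp add: N_def)
  have "norm (1 / (N \<omega> + 1)) \<le> 1" for \<omega> using N_nonneg[of \<omega>] by simp
  moreover have "N \<in> borel_measurable M" using N_int by auto
  ultimately have lower_int: "integrable M (\<lambda>\<omega>. real H ^ 2 / 2 * (1 / (N \<omega> + 1)))"
    by (intro integrable_mult_right integrable_const_bound[where B=1] AE_I2) auto
  have "expectation N = (\<Sum>t<H. measure M {\<omega>. e \<in> s (\<omega> t)})"
    unfolding N_sum using tested
    by (subst Bochner_Integration.integral_sum)
      (auto intro!: integrable_real_indicator simp: emeasure_eq_measure)
  then have "real H ^ 2 / (2 * ((\<Sum>t<H. measure M {\<omega>. e \<in> s (\<omega> t)}) + 1))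
      = real H ^ 2 / 2 * (1 / (expectation N + 1))" by simp
  also have "\<dots> \<le> real H ^ 2 / 2 * expectation (\<lambda>\<omega>. 1 / (N \<omega> + 1))"
    by (intro mult_left_mono inverse_expectation_succ_le N_int N_nonneg) simp
  also have "\<dots> = expectation (\<lambda>\<omega>. real H ^ 2 / 2 * (1 / (N \<omega> + 1)))"
    by (rule integral_mult_right_zero[symmetric])
  finally have "ennreal (real H ^ 2 / (2 * ((\<Sum>t<H. measure M {\<omega>. e \<in> s (\<omega> t)}) + 1)))
      \<le> \<integral>\<^sup>+ \<omega>. ennreal (real H ^ 2 / 2 * (1 / (N \<omega> + 1))) \<partial>M"
    using N_nonneg by (subst nn_integral_eq_integral[OF lower_int]) (auto intro: ennreal_leI)
  also have "\<dots> \<le> \<integral>\<^sup>+ \<omega>. (\<Sum>t<H. wait_time s e \<omega> t) \<partial>M"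
    using sum_wait_time_ge by (intro nn_integral_mono) (simp add: N_def)
  also have "\<dots> = (\<Sum>t<H. det_time s M e t)"
    unfolding det_time_def using sets by (intro nn_integral_sum wait_time_measurable)
  finally show ?thesis .
qed

lemma avg_time_seq_ge:
  assumes "prob_space M" "sets M = sets seq_space" "max_time s M e < \<infinity>" "H > 0"
  shows "real H / (2 * ((\<Sum>t<H. measure M {\<omega>. e \<in> s (\<omega> t)}) + 1)) \<le> avg_time_seq s M e H"
proof -
  have finite: "det_time s M e t < \<top>" for t
    using assms(3) unfolding max_time_def
    by (metis SUP_upper UNIV_I infinity_ennreal_def le_less_trans)
  have "real H ^ 2 / (2 * ((\<Sum>t<H. measure M {\<omega>. e \<in> s (\<omega> t)}) + 1))
      = enn2real (ennreal (real H ^ 2 / (2 * ((\<Sum>t<H. measure M {\<omega>. e \<in> s (\<omega> t)}) + 1))))"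
    by (intro enn2real_ennreal[symmetric] divide_nonneg_nonneg mult_nonneg_nonneg
        add_nonneg_nonneg sum_nonneg) auto
  also have "\<dots> \<le> enn2real (\<Sum>t<H. det_time s M e t)"
    using sum_det_time_ge[OF assms(1,2)]
    by (rule enn2real_mono) (simp add: ennreal_sum_less_top finite)
  also have "\<dots> = (\<Sum>t<H. enn2real (det_time s M e t))"
    using finite by (simp add: enn2real_sum)
  finally show ?thesis
    using assms(4) by (simp add: avg_time_seq_def power2_eq_square field_simps)
qed

section \<open>Limiting test frequencies\<close>

lemma prob_component_in:
  assumes "stochastic_schedule m M"
  shows "measure M {\<omega>. \<omega> t \<in> X} = (\<Sum>i\<in>X \<inter> {..<m}. measure M {\<omega> \<in> space M. \<omega> t = i})"
proof -
  interpret prob_space M using assms by (simp add: stochastic_schedule_def)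
  have sets: "sets M = sets seq_space" and ae: "AE \<omega> in M. \<forall>t. \<omega> t < m"
    using assms by (auto simp: stochastic_schedule_def)
  have component: "{\<omega>. \<omega> t \<in> Y} \<in> sets M" for Y
    using component_in_seq_space[of t Y] sets by simp
  from ae have "AE \<omega> in M. (\<omega> \<in> {\<omega>. \<omega> t \<in> X}) = (\<omega> \<in> {\<omega>. \<omega> t \<in> X \<inter> {..<m}})"
    by eventually_elim auto
  then have "measure M {\<omega>. \<omega> t \<in> X} = measure M {\<omega>. \<omega> t \<in> X \<inter> {..<m}}"
    by (rule measure_eq_AE) (rule component)+
  also have "{\<omega>. \<omega> t \<in> X \<inter> {..<m}} = (\<Union>i\<in>X \<inter> {..<m}. {\<omega>. \<omega> t \<in> {i}})" by auto
  also have "measure M \<dots> = (\<Sum>i\<in>X \<inter> {..<m}. measure M {\<omega>. \<omega> t \<in> {i}})"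
    using component[of "{_}"]
    by (intro finite_measure_finite_Union) (auto simp: disjoint_family_on_def)
  finally show ?thesis using sets_eq_imp_space_eq[OF sets] by simp
qed

lemma test_frequency_nonneg: "0 \<le> test_frequency M i H"
  by (simp add: test_frequency_def sum_nonneg)

lemma sum_test_frequency:
  assumes "stochastic_schedule m M" "H > 0"
  shows "(\<Sum>i<m. test_frequency M i H) = 1"
proof -
  interpret prob_space M using assms by (simp add: stochastic_schedule_def)
  have "space M = UNIV"
    using assms sets_eq_imp_space_eq[of M seq_space] by (simp add: stochastic_schedule_def)
  then have "(\<Sum>i<m. measure M {\<omega> \<in> space M. \<omega> t = i}) = 1" for t
    using prob_component_in[OF assms(1), of t UNIV] prob_space by simp
  then show ?thesis
    using assms(2) by (simp add: test_frequency_def flip: sum_divide_distrib) (subst sum.swap, simp)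
qed

lemma expected_tests_eq:
  assumes "stochastic_schedule m M"
  shows "(\<Sum>t<H. measure M {\<omega>. e \<in> s (\<omega> t)})
           = real H * (\<Sum>i\<in>{i. e \<in> s i} \<inter> {..<m}. test_frequency M i H)"
proof -
  have "(\<Sum>t<H. measure M {\<omega>. e \<in> s (\<omega> t)})
      = (\<Sum>i\<in>{i. e \<in> s i} \<inter> {..<m}. \<Sum>t<H. measure M {\<omega> \<in> space M. \<omega> t = i})"
    using prob_component_in[OF assms, of _ "{i. e \<in> s i}"] by (simp add: sum.swap[of _ "{..<H}"])
  then show ?thesis
    by (cases "H = 0") (simp_all add: test_frequency_def flip: sum_divide_distrib)
qed

lemma limiting_frequency_pmf:
  assumes "valid_schedule E m s M"
  obtains q where "set_pmf q \<subseteq> {..<m}" "\<And>i. i < m \<Longrightarrow> test_frequency M i \<longlonglongrightarrow> pmf q i"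
proof -
  have st: "stochastic_schedule m M" and "\<And>i. i < m \<Longrightarrow> convergent (test_frequency M i)"
    using assms by (auto simp: valid_schedule_def test_frequency_def [abs_def])
  then have freq_lim: "test_frequency M i \<longlonglongrightarrow> lim (test_frequency M i)" if "i < m" for i
    using that by (simp add: convergent_LIMSEQ_iff)
  define f where "f i = (if i < m then lim (test_frequency M i) else 0)" for i
  have f_nonneg: "0 \<le> f i" for i
    using LIMSEQ_le_const[OF freq_lim] test_frequency_nonneg by (auto simp: f_def)
  have "(\<lambda>H. \<Sum>i<m. test_frequency M i H) \<longlonglongrightarrow> (\<Sum>i<m. f i)"
    by (intro tendsto_sum) (simp add: f_def freq_lim)
  moreover have "(\<lambda>H. \<Sum>i<m. test_frequency M i H) \<longlonglongrightarrow> 1"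
    by (intro tendsto_eventually eventually_sequentiallyI[of 1])
      (simp add: sum_test_frequency[OF st])
  ultimately have "(\<Sum>i<m. f i) = 1" by (rule LIMSEQ_unique)
  moreover have "(\<integral>\<^sup>+ i. ennreal (f i) \<partial>count_space UNIV) = (\<Sum>i<m. ennreal (f i))"
    by (rule nn_integral_count_space') (auto simp: f_def)
  ultimately have "(\<integral>\<^sup>+ i. ennreal (f i) \<partial>count_space UNIV) = 1"
    by (simp add: f_nonneg sum_ennreal)
  then have "pmf (embed_pmf f) i = f i" for i
    by (intro pmf_embed_pmf f_nonneg)
  then show thesis
    by (intro that[of "embed_pmf f"]) (auto simp: set_pmf_iff f_def freq_lim split: if_splits)
qed

lemma exp_time_ge_half_inverse_rate:
  assumes valid: "valid_schedule E m s M" and e: "e \<in> E"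
    and q: "set_pmf q \<subseteq> {..<m}" "\<And>i. i < m \<Longrightarrow> test_frequency M i \<longlonglongrightarrow> pmf q i"
  shows "measure_pmf.prob q {i. e \<in> s i} > 0
           \<and> 1 / measure_pmf.prob q {i. e \<in> s i} \<le> 2 * exp_time s M e"
proof -
  define A where "A = {i. e \<in> s i} \<inter> {..<m}"
  define Q where "Q = measure_pmf.prob q {i. e \<in> s i}"
  have "Q = measure_pmf.prob q A"
    unfolding Q_def A_def using q(1)
    by (intro measure_pmf.finite_measure_eq_AE) (auto simp: AE_measure_pmf_iff)
  then have Q: "Q = (\<Sum>i\<in>A. pmf q i)" by (simp add: A_def measure_measure_pmf_finite)
  \<comment> \<open>\<open>H \<cdot> x H\<close> is the expected number of tests of \<open>e\<close> before time \<open>H\<close>, plus one.\<close>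
  define x where "x H = (\<Sum>i\<in>A. test_frequency M i H) + 1 / real H" for H
  have "x \<longlonglongrightarrow> (\<Sum>i\<in>A. pmf q i) + 0"
    unfolding x_def by (intro tendsto_add tendsto_sum q(2) lim_inverse_n') (simp add: A_def)
  then have x_lim: "x \<longlonglongrightarrow> Q" by (simp add: Q)
  have st: "stochastic_schedule m M" and "max_time s M e < \<infinity>"
    and "avg_time_seq s M e \<longlonglongrightarrow> exp_time s M e"
    using valid e by (auto simp: valid_schedule_def exp_time_def convergent_LIMSEQ_iff)
  have "1 \<le> 2 * avg_time_seq s M e H * x H" if "H > 0" for H
  proof -
    have "0 \<le> (\<Sum>i\<in>A. test_frequency M i H)" by (intro sum_nonneg test_frequency_nonneg)
    then have x_pos: "x H > 0" using that by (simp add: x_def add_nonneg_pos)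
    have "real H / (2 * (real H * x H)) \<le> avg_time_seq s M e H"
      using avg_time_seq_ge[of M s e H] st \<open>max_time s M e < \<infinity>\<close> that
      by (simp add: stochastic_schedule_def expected_tests_eq[OF st] A_def x_def distrib_left)
    then show ?thesis using that x_pos by (simp add: field_simps)
  qed
  then have one: "1 \<le> 2 * exp_time s M e * Q"
    by (intro LIMSEQ_le_const[OF tendsto_mult[OF tendsto_mult[OF tendsto_const] x_lim]])
      (use \<open>avg_time_seq s M e \<longlonglongrightarrow> exp_time s M e\<close> in \<open>auto intro!: exI[of _ 1]\<close>)
  have "Q \<ge> 0" by (simp add: Q_def)
  with one have "Q > 0" by (cases "Q = 0") auto
  moreover from this one have "1 / Q \<le> 2 * exp_time s M e"
    by (simp add: divide_le_eq mult.commute)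
  ultimately show ?thesis by (simp add: Q_def)
qed

lemma memoryless_schedule_within_factor_two:
  assumes "valid_schedule E m s M"
  obtains M' where "memoryless_schedule m M'" "valid_schedule E m s M'"
    "\<And>e. e \<in> E \<Longrightarrow> exp_time s M' e \<le> 2 * exp_time s M e"
proof -
  obtain q where q: "set_pmf q \<subseteq> {..<m}" "\<And>i. i < m \<Longrightarrow> test_frequency M i \<longlonglongrightarrow> pmf q i"
    using limiting_frequency_pmf[OF assms] by blast
  note rate = exp_time_ge_half_inverse_rate[OF assms _ q]
  show thesis
  proof (rule that)
    show "memoryless_schedule m (iid_schedule q)" by (rule memoryless_iid_schedule[OF q(1)])
    show "valid_schedule E m s (iid_schedule q)" using rate by (intro valid_iid_schedule q(1)) blast
    show "exp_time s (iid_schedule q) e \<le> 2 * exp_time s M e" if "e \<in> E" for e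
      using rate[OF that] by (simp add: exp_time_iid)
  qed
qed

lemma EEP_le_scaled:
  assumes "\<forall>e\<in>E. 0 \<le> p e" "\<And>e. e \<in> E \<Longrightarrow> exp_time s M' e \<le> c * exp_time s M e"
  shows "EEP E p s M' \<le> c * EEP E p s M"
  unfolding EEP_def sum_distrib_left
  using assms by (intro sum_mono) (metis mult.left_commute mult_left_mono)

lemma WEP_le_scaled:
  assumes "finite E" "E \<noteq> {}" "\<forall>e\<in>E. 0 \<le> p e" "0 \<le> c"
    and "\<And>e. e \<in> E \<Longrightarrow> exp_time s M' e \<le> c * exp_time s M e"
  shows "WEP E p s M' \<le> c * WEP E p s M"
  unfolding WEP_def
proof (subst Max_le_iff, safe)
  fix e assume "e \<in> E"
  then have "p e * exp_time s M' e \<le> c * (p e * exp_time s M e)"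
    using assms(3,5) by (metis mult.left_commute mult_left_mono)
  also have "\<dots> \<le> c * Max ((\<lambda>e. p e * exp_time s M e) ` E)"
    using \<open>e \<in> E\<close> assms(1,4) by (intro mult_left_mono Max_ge) auto
  finally show "p e * exp_time s M' e \<le> c * Max ((\<lambda>e. p e * exp_time s M e) ` E)" .
qed (use assms(1,2) in auto)

theorem theorem3:
  fixes E :: "'e set" and p :: "'e \<Rightarrow> real" and m :: nat and s :: "nat \<Rightarrow> 'e set"
  assumes "finite E"
    and "\<forall>e\<in>E. p e \<ge> 0"
    and "\<forall>i<m. s i \<subseteq> E"
  shows "(sum p E = 1 \<longrightarrow>
            opt_SUM E p m s \<le> optM_SUM E p m s \<and> optM_SUM E p m s \<le> 2 * opt_SUM E p m s)
       \<and> (E \<noteq> {} \<and> Max (p ` E) = 1 \<longrightarrow>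
            opt_MAX E p m s \<le> optM_MAX E p m s \<and> optM_MAX E p m s \<le> 2 * opt_MAX E p m s)"
proof -
  let ?valid = "{M. valid_schedule E m s M}"
  let ?memoryless = "{M. memoryless_schedule m M \<and> valid_schedule E m s M}"
  have improve: "\<exists>M'\<in>?memoryless. EEP E p s M' \<le> 2 * EEP E p s M
      \<and> (E \<noteq> {} \<longrightarrow> WEP E p s M' \<le> 2 * WEP E p s M)" if M: "M \<in> ?valid" for M
  proof -
    obtain M' where "memoryless_schedule m M'" "valid_schedule E m s M'"
      and factor_two: "\<And>e. e \<in> E \<Longrightarrow> exp_time s M' e \<le> 2 * exp_time s M e"
      by (rule memoryless_schedule_within_factor_two) (use M in auto)
    moreover have "EEP E p s M' \<le> 2 * EEP E p s M"
      using assms(2) factor_two by (rule EEP_le_scaled)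
    moreover have "E \<noteq> {} \<longrightarrow> WEP E p s M' \<le> 2 * WEP E p s M"
      using assms(1,2) factor_two by (auto intro: WEP_le_scaled)
    ultimately show ?thesis by blast
  qed
  have "optM_SUM E p m s \<le> ereal 2 * opt_SUM E p m s"
    unfolding opt_SUM_def optM_SUM_def by (rule INF_le_scaled_INF) (use improve in auto)
  moreover have "optM_MAX E p m s \<le> ereal 2 * opt_MAX E p m s" if "E \<noteq> {}"
    unfolding opt_MAX_def optM_MAX_def by (rule INF_le_scaled_INF) (use improve that in auto)
  moreover have "opt_SUM E p m s \<le> optM_SUM E p m s" "opt_MAX E p m s \<le> optM_MAX E p m s"
    unfolding opt_SUM_def optM_SUM_def opt_MAX_def optM_MAX_def by (auto intro: INF_superset_mono)
  ultimately show ?thesis by auto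
qed

end
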